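(* $[\llcorner]\subsetneq[\llcorner,\urcorner]\subsetneq \text{Helly-}B_1\text{-EPG}$, and the class Helly-$B_1$-EPG is incomparable (under inclusion) with each of the classes $[\llcorner,\ulcorner]$ and $[\llcorner,\ulcorner,\urcorner]$.
   Context: A grid is the set of integer points of the plane; a grid edge joins two grid points at distance $1$. A path in the grid is a sequence of distinct grid edges in which consecutive edges share exactly one grid point and non-consecutive edges share none; a bend is a pair of consecutive edges with different directions (horizontal/vertical). An EPG representation of a graph $G$ is a family $(P_v)_{v\in V(G)}$ of grid paths such that distinct $u,v$ are adjacent iff $P_u,P_v$ share a grid edge; it is $B_1$-EPG if every path has at most one bend, and is Helly if every subfamily of pairwise edge-intersecting paths has a grid edge common to all its members. Helly-$B_1$-EPG is the class of graphs admitting a Helly $B_1$-EPG representation. A one-bend path has one of the four shapes $\llcorner,\lrcorner,\ulcorner,\urcorner$ (according to which two directions leave its bend point). For $S\subseteq\{\llcorner,\lrcorner,\ulcorner,\urcorner\}$, $[S]$ denotes the class of graphs having a $B_1$-EPG representation in which every path has a shape in $S$, where paths with no bend are regarded as degenerate $\llcorner$'s. *)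

theory Defs
  imports Main
begin

definition graph :: "'a set \<Rightarrow> ('a \<Rightarrow> 'a \<Rightarrow> bool) \<Rightarrow> bool" where
  "graph V E \<longleftrightarrow> finite V \<and> (\<forall>u v. E u v \<longrightarrow> u \<in> V \<and> v \<in> V)
     \<and> (\<forall>u v. E u v \<longrightarrow> E v u) \<and> (\<forall>v. \<not> E v v)"

type_synonym point = "int \<times> int"

definition grid_edge :: "point set \<Rightarrow> bool" where
  "grid_edge e \<longleftrightarrow> (\<exists>p q. e = {p, q} \<and> \<bar>fst p - fst q\<bar> + \<bar>snd p - snd q\<bar> = 1)"

definition horizontal :: "point set \<Rightarrow> bool" where
  "horizontal e \<longleftrightarrow> (\<exists>x y. e = {(x, y), (x + 1, y)})"

definition grid_path :: "point set list \<Rightarrow> bool" where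
  "grid_path es \<longleftrightarrow> es \<noteq> [] \<and> (\<forall>e\<in>set es. grid_edge e) \<and> distinct es
     \<and> (\<forall>i. Suc i < length es \<longrightarrow> card (es ! i \<inter> es ! Suc i) = 1)
     \<and> (\<forall>i j. Suc i < j \<and> j < length es \<longrightarrow> es ! i \<inter> es ! j = {})"

definition bend_positions :: "point set list \<Rightarrow> nat set" where
  "bend_positions es = {i. Suc i < length es \<and> horizontal (es ! i) \<noteq> horizontal (es ! Suc i)}"

definition bends :: "point set list \<Rightarrow> nat" where
  "bends es = card (bend_positions es)"

text \<open>LL = \<llcorner> (arms go right and up from the bend point), LR = \<lrcorner> (left and up),
  UL = \<ulcorner> (right and down), UR = \<urcorner> (left and down).\<close>
datatype shape = LL | LR | UL | UR

definition other_end :: "point set \<Rightarrow> point \<Rightarrow> point" where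
  "other_end e b = (THE q. q \<in> e \<and> q \<noteq> b)"

definition dir_from :: "point \<Rightarrow> point \<Rightarrow> int \<times> int" where
  "dir_from b q = (fst q - fst b, snd q - snd b)"

definition bend_shape :: "point set \<Rightarrow> point set \<Rightarrow> shape" where
  "bend_shape e1 e2 =
     (let b = (THE b. b \<in> e1 \<inter> e2);
          D = {dir_from b (other_end e1 b), dir_from b (other_end e2 b)}
      in if D = {(1, 0), (0, 1)} then LL
         else if D = {(-1, 0), (0, 1)} then LR
         else if D = {(1, 0), (0, -1)} then UL
         else UR)"

text \<open>A path with at most one bend has a shape in S; bendless paths count as degenerate \<llcorner>.\<close>
definition shape_in :: "shape set \<Rightarrow> point set list \<Rightarrow> bool" where
  "shape_in S es \<longleftrightarrow> bends es \<le> 1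
     \<and> (bends es = 0 \<longrightarrow> LL \<in> S)
     \<and> (\<forall>i \<in> bend_positions es. bend_shape (es ! i) (es ! Suc i) \<in> S)"

definition EPG_rep :: "'a set \<Rightarrow> ('a \<Rightarrow> 'a \<Rightarrow> bool) \<Rightarrow> ('a \<Rightarrow> point set list) \<Rightarrow> bool" where
  "EPG_rep V E P \<longleftrightarrow> (\<forall>v\<in>V. grid_path (P v))
     \<and> (\<forall>u\<in>V. \<forall>v\<in>V. u \<noteq> v \<longrightarrow> (E u v \<longleftrightarrow> set (P u) \<inter> set (P v) \<noteq> {}))"

definition B1_EPG_rep :: "'a set \<Rightarrow> ('a \<Rightarrow> 'a \<Rightarrow> bool) \<Rightarrow> ('a \<Rightarrow> point set list) \<Rightarrow> bool" where
  "B1_EPG_rep V E P \<longleftrightarrow> EPG_rep V E P \<and> (\<forall>v\<in>V. bends (P v) \<le> 1)"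

definition helly_rep :: "'a set \<Rightarrow> ('a \<Rightarrow> point set list) \<Rightarrow> bool" where
  "helly_rep V P \<longleftrightarrow> (\<forall>W \<subseteq> V. W \<noteq> {} \<and> (\<forall>u\<in>W. \<forall>v\<in>W. set (P u) \<inter> set (P v) \<noteq> {})
      \<longrightarrow> (\<exists>e. \<forall>v\<in>W. e \<in> set (P v)))"

definition helly_B1_EPG :: "'a set \<Rightarrow> ('a \<Rightarrow> 'a \<Rightarrow> bool) \<Rightarrow> bool" where
  "helly_B1_EPG V E \<longleftrightarrow> (\<exists>P. B1_EPG_rep V E P \<and> helly_rep V P)"

definition shape_class :: "shape set \<Rightarrow> 'a set \<Rightarrow> ('a \<Rightarrow> 'a \<Rightarrow> bool) \<Rightarrow> bool" where
  "shape_class S V E \<longleftrightarrow> (\<exists>P. B1_EPG_rep V E P \<and> (\<forall>v\<in>V. shape_in S (P v)))"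

end

theory Submission
  imports Defs "HOL-Library.Product_Plus"
begin

(* A path with at most one bend is determined by its edge set, a "cross": a horizontal segment
   and a vertical segment through the bend point, the shape recording at which ends of the two
   segments the bend lies.  Two paths share an edge iff their crosses overlap on a common row or
   column, so membership in the classes becomes a system of integer inequalities.
   Pairwise meeting crosses of shapes \<llcorner> and \<urcorner> lie on one row or one column; unless they
   all share the bend point, their arms along that line overlap pairwise as intervals, which gives
   a common edge.  Triangle-free graphs are trivially Helly.  The separations come from K_{2,3}
   (in [\<llcorner>,\<urcorner>] but not in [\<llcorner>,\<ulcorner>]), the 3-sun (in [\<llcorner>,\<ulcorner>] but not Helly) and the 3-cube
   (Helly but not in [\<llcorner>,\<ulcorner>,\<urcorner>]). *)

section \<open>Crosses\<close>

(* Cross cx cy xlo xhi ylo yhi is the union of the horizontal segment from (xlo, cy) to (xhi, cy)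
   and the vertical segment from (cx, ylo) to (cx, yhi); (cx, cy) is the bend point. *)
datatype cross = Cross (cx: int) (cy: int) (xlo: int) (xhi: int) (ylo: int) (yhi: int)

definition hedge :: "int \<Rightarrow> int \<Rightarrow> point set" where
  "hedge x y = {(x, y), (x + 1, y)}"

definition vedge :: "int \<Rightarrow> int \<Rightarrow> point set" where
  "vedge x y = {(x, y), (x, y + 1)}"

lemma hedge_eq_iff [simp]: "hedge x y = hedge x' y' \<longleftrightarrow> x = x' \<and> y = y'"
  and vedge_eq_iff [simp]: "vedge x y = vedge x' y' \<longleftrightarrow> x = x' \<and> y = y'"
  and hedge_neq_vedge [simp]: "hedge x y \<noteq> vedge x' y'" "vedge x' y' \<noteq> hedge x y"
  unfolding hedge_def vedge_def by (auto simp: doubleton_eq_iff)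

definition cross_edges :: "cross \<Rightarrow> point set set" where
  "cross_edges c = {hedge x (cy c) | x. xlo c \<le> x \<and> x < xhi c}
                 \<union> {vedge (cx c) y | y. ylo c \<le> y \<and> y < yhi c}"

definition crosses_meet :: "cross \<Rightarrow> cross \<Rightarrow> bool" where
  "crosses_meet c d \<longleftrightarrow>
     cy c = cy d \<and> max (xlo c) (xlo d) < min (xhi c) (xhi d)
   \<or> cx c = cx d \<and> max (ylo c) (ylo d) < min (yhi c) (yhi d)"

definition crosses_meet3 :: "cross \<Rightarrow> cross \<Rightarrow> cross \<Rightarrow> bool" where
  "crosses_meet3 a b c \<longleftrightarrow>
     cy a = cy b \<and> cy b = cy c \<and> max (max (xlo a) (xlo b)) (xlo c) < min (min (xhi a) (xhi b)) (xhi c)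
   \<or> cx a = cx b \<and> cx b = cx c \<and> max (max (ylo a) (ylo b)) (ylo c) < min (min (yhi a) (yhi b)) (yhi c)"

lemma hedge_in_cross_edges [simp]:
  "hedge x y \<in> cross_edges c \<longleftrightarrow> y = cy c \<and> xlo c \<le> x \<and> x < xhi c"
  and vedge_in_cross_edges [simp]:
  "vedge x y \<in> cross_edges c \<longleftrightarrow> x = cx c \<and> ylo c \<le> y \<and> y < yhi c"
  unfolding cross_edges_def by auto

lemma cross_edgesE:
  assumes "e \<in> cross_edges c"
  obtains x where "e = hedge x (cy c)" | y where "e = vedge (cx c) y"
  using assms unfolding cross_edges_def by blast

lemma cross_edges_Int_iff: "cross_edges c \<inter> cross_edges d \<noteq> {} \<longleftrightarrow> crosses_meet c d"
proof
  assume "cross_edges c \<inter> cross_edges d \<noteq> {}"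
  then obtain e where e: "e \<in> cross_edges c" "e \<in> cross_edges d" by blast
  show "crosses_meet c d"
    using e(1) by (cases rule: cross_edgesE) (use e in \<open>auto simp: crosses_meet_def\<close>)
next
  assume "crosses_meet c d"
  then have "hedge (max (xlo c) (xlo d)) (cy c) \<in> cross_edges c \<inter> cross_edges d
      \<or> vedge (cx c) (max (ylo c) (ylo d)) \<in> cross_edges c \<inter> cross_edges d"
    unfolding crosses_meet_def by auto
  then show "cross_edges c \<inter> cross_edges d \<noteq> {}" by blast
qed

lemma cross_edges_Int3:
  assumes "e \<in> cross_edges a" "e \<in> cross_edges b" "e \<in> cross_edges c"
  shows "crosses_meet3 a b c"
  using assms(1) by (cases rule: cross_edgesE) (use assms in \<open>auto simp: crosses_meet3_def\<close>)

fun has_shape :: "shape \<Rightarrow> cross \<Rightarrow> bool" where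
  "has_shape LL c \<longleftrightarrow> xlo c = cx c \<and> ylo c = cy c"
| "has_shape LR c \<longleftrightarrow> xhi c = cx c \<and> ylo c = cy c"
| "has_shape UL c \<longleftrightarrow> xlo c = cx c \<and> yhi c = cy c"
| "has_shape UR c \<longleftrightarrow> xhi c = cx c \<and> yhi c = cy c"

definition cross_in :: "shape set \<Rightarrow> cross \<Rightarrow> bool" where
  "cross_in S c \<longleftrightarrow> xlo c \<le> cx c \<and> cx c \<le> xhi c \<and> ylo c \<le> cy c \<and> cy c \<le> yhi c
     \<and> (\<exists>s\<in>S. has_shape s c)"

lemma cross_in_mono: "cross_in S c \<Longrightarrow> S \<subseteq> T \<Longrightarrow> cross_in T c"
  unfolding cross_in_def by blast

section \<open>Walks and rays\<close>

definition unit_dir :: "int \<times> int \<Rightarrow> bool" where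
  "unit_dir d \<longleftrightarrow> d \<in> {(1, 0), (-1, 0), (0, 1), (0, -1)}"

definition move :: "point \<Rightarrow> int \<times> int \<Rightarrow> int \<Rightarrow> point" where
  "move p d t = p + (t * fst d, t * snd d)"

lemma move_Pair [simp]: "move (a, b) (c, d) t = (a + t * c, b + t * d)"
  by (simp add: move_def)

lemma move_0 [simp]: "move p d 0 = p"
  and move_1 [simp]: "move p d 1 = p + d"
  and move_move [simp]: "move (move p d s) d t = move p d (s + t)"
  and move_uminus [simp]: "move p (- d) t = move p d (- t)"
  and move_plus [simp]: "move p d t + d = move p d (t + 1)"
  by (cases p; cases d; simp add: algebra_simps)+

definition walk_edges :: "(nat \<Rightarrow> point) \<Rightarrow> nat \<Rightarrow> nat \<Rightarrow> point set set" where
  "walk_edges w a b = (\<lambda>i. {w i, w (Suc i)}) ` {a..<b}"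

definition ray :: "point \<Rightarrow> int \<times> int \<Rightarrow> nat \<Rightarrow> point set set" where
  "ray p d n = walk_edges (\<lambda>i. move p d (int i)) 0 n"

lemma walk_edges_split:
  "a \<le> m \<Longrightarrow> m \<le> b \<Longrightarrow> walk_edges w a b = walk_edges w a m \<union> walk_edges w m b"
  unfolding walk_edges_def by (simp add: ivl_disj_un_two(3) flip: image_Un)

lemma walk_edges_cong:
  "(\<And>j. a \<le> j \<Longrightarrow> j \<le> b \<Longrightarrow> w j = v j) \<Longrightarrow> walk_edges w a b = walk_edges v a b"
  unfolding walk_edges_def by (auto intro!: image_cong)

lemma walk_edges_shift: "walk_edges w a b = walk_edges (\<lambda>i. w (i + a)) 0 (b - a)"
proof (cases "a \<le> b")
  case True
  then have ivl: "{a..<b} = (\<lambda>i. i + a) ` {0..<b - a}"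
    by simp
  show ?thesis
    unfolding walk_edges_def ivl image_image by simp
qed (simp add: walk_edges_def)

lemma walk_edges_reverse: "walk_edges w a b = walk_edges (\<lambda>i. w (b - i)) 0 (b - a)"
proof -
  have ivl: "{a..<b} = (\<lambda>i. b - Suc i) ` {0..<b - a}"
  proof (intro set_eqI iffI)
    fix j assume "j \<in> {a..<b}"
    then have "j = b - Suc (b - Suc j)" "b - Suc j \<in> {0..<b - a}" by auto
    then show "j \<in> (\<lambda>i. b - Suc i) ` {0..<b - a}" by blast
  qed auto
  have "Suc (b - Suc i) = b - i" if "i \<in> {0..<b - a}" for i
    using that by auto
  then show ?thesis
    unfolding walk_edges_def ivl image_image
    by (intro image_cong[OF refl]) (simp add: insert_commute)
qed

lemma walk_edges_forward:
  assumes "a \<le> b" and on_ray: "\<And>j. a \<le> j \<Longrightarrow> j \<le> b \<Longrightarrow> w j = move p d (int j - int a)"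
  shows "walk_edges w a b = ray p d (b - a)"
  unfolding ray_def walk_edges_shift[of w]
proof (rule walk_edges_cong)
  fix j assume "0 \<le> j" "j \<le> b - a"
  then show "w (j + a) = move p d (int j)"
    using \<open>a \<le> b\<close> on_ray[of "j + a"] by simp
qed

lemma walk_edges_backward:
  assumes "a \<le> b" and on_ray: "\<And>j. a \<le> j \<Longrightarrow> j \<le> b \<Longrightarrow> w j = move p d (int b - int j)"
  shows "walk_edges w a b = ray p d (b - a)"
  unfolding ray_def walk_edges_reverse[of w]
proof (rule walk_edges_cong)
  fix j assume "0 \<le> j" "j \<le> b - a"
  then show "w (b - j) = move p d (int j)"
    using \<open>a \<le> b\<close> on_ray[of "b - j"] by simp
qed

lemma ray_0 [simp]: "ray p d 0 = {}"
  unfolding ray_def walk_edges_def by simp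

lemma ray_reverse: "ray p d n = ray (move p d (int n)) (- d) n"
proof -
  have "ray p d n = walk_edges (\<lambda>i. move p d (int i)) 0 n"
    unfolding ray_def ..
  also have "\<dots> = ray (move p d (int n)) (- d) n"
    using walk_edges_backward[where a = 0 and b = n and w = "\<lambda>i. move p d (int i)"]
    by (simp add: move_def algebra_simps)
  finally show ?thesis .
qed

lemma image_int_interval: "(\<lambda>i. f (a + int i)) ` {0..<n} = {f k | k. a \<le> k \<and> k < a + int n}"
proof (intro set_eqI iffI)
  fix e assume "e \<in> {f k | k. a \<le> k \<and> k < a + int n}"
  then obtain k where k: "e = f k" "a \<le> k" "k < a + int n" by blast
  then have "e = f (a + int (nat (k - a)))" "nat (k - a) \<in> {0..<n}" by auto
  then show "e \<in> (\<lambda>i. f (a + int i)) ` {0..<n}" by blast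
qed auto

lemma ray_right: "ray (x, y) (1, 0) n = {hedge k y | k. x \<le> k \<and> k < x + int n}"
  and ray_up: "ray (x, y) (0, 1) n = {vedge x k | k. y \<le> k \<and> k < y + int n}"
  unfolding image_int_interval[symmetric]
  by (simp_all add: ray_def walk_edges_def move_def hedge_def vedge_def add_ac)

lemma ray_left: "ray (x, y) (-1, 0) n = {hedge k y | k. x - int n \<le> k \<and> k < x}"
  and ray_down: "ray (x, y) (0, -1) n = {vedge x k | k. y - int n \<le> k \<and> k < y}"
  by (subst ray_reverse; simp add: move_def ray_right ray_up)+

fun hdir :: "shape \<Rightarrow> int \<times> int" where
  "hdir LL = (1, 0)" | "hdir LR = (-1, 0)" | "hdir UL = (1, 0)" | "hdir UR = (-1, 0)"

fun vdir :: "shape \<Rightarrow> int \<times> int" where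
  "vdir LL = (0, 1)" | "vdir LR = (0, 1)" | "vdir UL = (0, -1)" | "vdir UR = (0, -1)"

definition shape_cross :: "shape \<Rightarrow> point \<Rightarrow> nat \<Rightarrow> nat \<Rightarrow> cross" where
  "shape_cross s p m n =
     (let q = move p (hdir s) (int m); r = move p (vdir s) (int n)
      in Cross (fst p) (snd p) (min (fst p) (fst q)) (max (fst p) (fst q))
           (min (snd p) (snd r)) (max (snd p) (snd r)))"

lemma cross_edges_shape_cross:
  "cross_edges (shape_cross s p m n) = ray p (hdir s) m \<union> ray p (vdir s) n"
  by (cases p; cases s)
    (simp_all add: shape_cross_def cross_edges_def move_def ray_right ray_left ray_up ray_down)

lemma cross_in_shape_cross: "cross_in {s} (shape_cross s p m n)"
  by (cases s) (simp_all add: shape_cross_def cross_in_def move_def)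

lemma cross_in_shape_crossE:
  assumes "cross_in S c"
  obtains s where "s \<in> S" "c = shape_cross s (cx c, cy c) (nat (xhi c - xlo c)) (nat (yhi c - ylo c))"
proof -
  obtain s where "s \<in> S" "has_shape s c"
    using assms unfolding cross_in_def by blast
  moreover have "c = shape_cross s (cx c, cy c) (nat (xhi c - xlo c)) (nat (yhi c - ylo c))"
    using assms \<open>has_shape s c\<close> unfolding cross_in_def
    by (cases c; cases s) (auto simp: shape_cross_def move_def)
  ultimately show ?thesis using that by blast
qed

lemma corner_rays_cross:
  assumes "{a, b} = {hdir s, vdir s}"
  obtains c where "ray p a m \<union> ray p b n = cross_edges c" "cross_in {s} c"
proof -
  have "hdir s \<noteq> vdir s" by (cases s) auto
  then have "a = hdir s \<and> b = vdir s \<or> a = vdir s \<and> b = hdir s"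
    using assms by (auto simp: doubleton_eq_iff)
  then show ?thesis
    using that cross_edges_shape_cross cross_in_shape_cross by (metis Un_commute)
qed

lemma ray_LL_cross:
  assumes "unit_dir d"
  obtains c where "ray p d n = cross_edges c" "cross_in {LL} c"
proof -
  obtain q d' where ray: "ray p d n = ray q d' n" and d': "d' = hdir LL \<or> d' = vdir LL"
  proof (cases "d = hdir LL \<or> d = vdir LL")
    case False
    then have "- d = hdir LL \<or> - d = vdir LL"
      using assms unfolding unit_dir_def by auto
    then show ?thesis
      using that ray_reverse by blast
  qed (use that in blast)
  have "ray q (hdir LL) n = cross_edges (shape_cross LL q n 0)"
    "ray q (vdir LL) n = cross_edges (shape_cross LL q 0 n)"
    by (simp_all add: cross_edges_shape_cross)
  then show ?thesis
    using that ray d' cross_in_shape_cross by metis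
qed

lemma other_end_doubleton: "q \<noteq> p \<Longrightarrow> other_end {q, p} p = q"
  unfolding other_end_def by (rule the_equality) auto

lemma bend_shape_corner:
  assumes dirs: "{a, b} = {hdir s, vdir s}"
  shows "bend_shape {p + a, p} {p, p + b} = s"
proof -
  have "hdir s \<noteq> 0" "vdir s \<noteq> 0" "hdir s \<noteq> vdir s"
    by (cases s; simp add: zero_prod_def)+
  then have nz: "a \<noteq> 0" "b \<noteq> 0" "a \<noteq> b"
    using dirs by (auto simp: doubleton_eq_iff)
  then have common: "{p + a, p} \<inter> {p, p + b} = {p}" by auto
  have "(THE q. q \<in> {p + a, p} \<inter> {p, p + b}) = p"
    unfolding common by simp
  moreover have "other_end {p + a, p} p = p + a"
    using nz by (simp add: other_end_doubleton)
  moreover have "other_end {p, p + b} p = p + b"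
    using nz other_end_doubleton[of "p + b" p] by (simp add: insert_commute)
  moreover have "dir_from p (p + a) = a" "dir_from p (p + b) = b"
    unfolding dir_from_def by simp_all
  ultimately have "bend_shape {p + a, p} {p, p + b} =
      (if {hdir s, vdir s} = {(1, 0), (0, 1)} then LL
       else if {hdir s, vdir s} = {(-1, 0), (0, 1)} then LR
       else if {hdir s, vdir s} = {(1, 0), (0, -1)} then UL else UR)"
    unfolding bend_shape_def Let_def by (simp add: dirs)
  also have "\<dots> = s"
    by (cases s) (simp_all add: doubleton_eq_iff)
  finally show ?thesis .
qed

lemma perpendicular_shape:
  assumes "unit_dir a" "unit_dir b" "(snd a = 0) \<noteq> (snd b = 0)"
  obtains s where "{a, b} = {hdir s, vdir s}"
proof
  let ?s = "if fst a + fst b = 1 then if snd a + snd b = 1 then LL else UL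
            else if snd a + snd b = 1 then LR else UR"
  show "{a, b} = {hdir ?s, vdir ?s}"
    using assms unfolding unit_dir_def by (elim insertE emptyE) (auto simp: insert_commute)
qed

section \<open>Paths with at most one bend are crosses\<close>

definition adjacent :: "point \<Rightarrow> point \<Rightarrow> bool" where
  "adjacent p q \<longleftrightarrow> unit_dir (q - p)"

lemma adjacent_iff_dist: "adjacent p q \<longleftrightarrow> \<bar>fst p - fst q\<bar> + \<bar>snd p - snd q\<bar> = 1"
  unfolding adjacent_def unit_dir_def by (cases p; cases q) (auto simp: abs_if split: if_splits)

lemma adjacent_neq: "adjacent p q \<Longrightarrow> p \<noteq> q"
  unfolding adjacent_def unit_dir_def by (auto simp: zero_prod_def)

lemma adjacent_sym: "adjacent p q \<Longrightarrow> adjacent q p"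
  unfolding adjacent_iff_dist by linarith

lemma horizontal_adjacent:
  assumes "adjacent p q"
  shows "horizontal {p, q} \<longleftrightarrow> snd q = snd p"
proof
  assume "snd q = snd p"
  then have "{p, q} = {(min (fst p) (fst q), snd p), (min (fst p) (fst q) + 1, snd p)}"
    using assms unfolding adjacent_def unit_dir_def by (cases p; cases q) auto
  then show "horizontal {p, q}"
    unfolding horizontal_def by blast
qed (auto simp: horizontal_def doubleton_eq_iff)

lemma unit_dir_uminus: "unit_dir d \<Longrightarrow> unit_dir (- d)"
  unfolding unit_dir_def by auto

lemma unit_dir_same_axis:
  assumes "unit_dir a" "unit_dir b" "(snd a = 0) = (snd b = 0)" "a + b \<noteq> 0"
  shows "b = a"
  using assms unfolding unit_dir_def by (elim insertE emptyE) (simp_all add: zero_prod_def)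

definition turns :: "(nat \<Rightarrow> point) \<Rightarrow> nat \<Rightarrow> nat set" where
  "turns w N = {i. Suc i < N \<and> (snd (w (Suc i)) = snd (w i)) \<noteq> (snd (w (Suc (Suc i))) = snd (w (Suc i)))}"

locale grid_walk =
  fixes w :: "nat \<Rightarrow> point" and N :: nat
  assumes adjacent_steps: "i < N \<Longrightarrow> adjacent (w i) (w (Suc i))"
    and no_backtrack: "Suc i < N \<Longrightarrow> w (Suc (Suc i)) \<noteq> w i"
begin

definition step :: "nat \<Rightarrow> int \<times> int" where
  "step i = w (Suc i) - w i"

lemma w_Suc: "w (Suc i) = w i + step i"
  unfolding step_def by simp

lemma unit_step: "i < N \<Longrightarrow> unit_dir (step i)"
  using adjacent_steps unfolding adjacent_def step_def .

lemma step_Suc: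
  assumes "Suc i < N" "i \<notin> turns w N"
  shows "step (Suc i) = step i"
proof (rule unit_dir_same_axis)
  show "unit_dir (step i)" "unit_dir (step (Suc i))"
    using assms(1) unit_step by auto
  show "(snd (step i) = 0) = (snd (step (Suc i)) = 0)"
    using assms unfolding turns_def step_def by simp
  show "step i + step (Suc i) \<noteq> 0"
    using no_backtrack[OF assms(1)] unfolding step_def by simp
qed

lemma straight_run:
  assumes no_turn: "\<And>j. a \<le> j \<Longrightarrow> Suc j < b \<Longrightarrow> j \<notin> turns w N" and "b \<le> N"
  shows "a \<le> j \<Longrightarrow> j \<le> b \<Longrightarrow>
           w j = move (w a) (step a) (int j - int a) \<and> (j < b \<longrightarrow> step j = step a)"
proof (induction j)
  case (Suc j)
  show ?case
  proof (cases "a = Suc j")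
    case False
    then have "a \<le> j" "j < b" using Suc.prems by auto
    then have "w j = move (w a) (step a) (int j - int a)" "step j = step a"
      using Suc.IH by auto
    moreover have "step (Suc j) = step j" if "Suc j < b"
      using step_Suc no_turn \<open>a \<le> j\<close> that assms(2) by simp
    moreover have "w (Suc j) = move (w a) (step a) (int (Suc j) - int a)"
    proof -
      have "w (Suc j) = w j + step j"
        by (rule w_Suc)
      also have "\<dots> = move (w a) (step a) (int j - int a) + step a"
        using \<open>w j = _\<close> \<open>step j = step a\<close> by simp
      also have "\<dots> = move (w a) (step a) (int (Suc j) - int a)"
        unfolding move_plus by (simp add: algebra_simps)
      finally show ?thesis .
    qed
    ultimately show ?thesis
      by simp
  qed simp
qed simp

lemma straight_walk_cross:
  assumes "0 < N" "turns w N = {}"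
  obtains c where "walk_edges w 0 N = cross_edges c" "cross_in {LL} c"
proof -
  define p where "p = w 0"
  have "w j = move p (step 0) (int j)" if "j \<le> N" for j
    using straight_run[of 0 N j] assms(2) that unfolding p_def by simp
  then have "walk_edges w 0 N = ray p (step 0) N"
    using walk_edges_forward[of 0 N w p "step 0"] by simp
  moreover obtain c where "ray p (step 0) N = cross_edges c" "cross_in {LL} c"
    using ray_LL_cross[OF unit_step[OF assms(1)]] .
  ultimately show ?thesis
    using that by simp
qed

lemma turning_walk_cross:
  assumes "turns w N = {m}"
  obtains c where "walk_edges w 0 N = cross_edges c"
    "cross_in {bend_shape {w m, w (Suc m)} {w (Suc m), w (Suc (Suc m))}} c"
proof -
  define B where "B = w (Suc m)"
  define a where "a = - step m"
  define b where "b = step (Suc m)"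
  have m: "Suc m < N" "m \<in> turns w N"
    using assms unfolding turns_def by auto
  have run1: "w j = move (w 0) (step 0) (int j)" if "j \<le> Suc m" for j
    using straight_run[of 0 "Suc m" j] assms that m(1) by auto
  have "step m = step 0"
    using straight_run[of 0 "Suc m" m] assms m(1) by auto
  then have "w j = move B a (int (Suc m) - int j)" if "j \<le> Suc m" for j
    using run1[of j] run1[of "Suc m"] that unfolding B_def a_def by simp
  then have first: "walk_edges w 0 (Suc m) = ray B a (Suc m)"
    using walk_edges_backward[of 0 "Suc m" w B a] by simp
  have "w j = move B b (int j - int (Suc m))" if "Suc m \<le> j" "j \<le> N" for j
    using straight_run[of "Suc m" N j] assms that unfolding B_def b_def by auto
  then have second: "walk_edges w (Suc m) N = ray B b (N - Suc m)"
    using walk_edges_forward[of "Suc m" N w B b] m(1) by simp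
  have "unit_dir a" "unit_dir b"
    using m(1) unit_step unit_dir_uminus unfolding a_def b_def by auto
  moreover have "(snd a = 0) \<noteq> (snd b = 0)"
    using m(2) unfolding turns_def a_def b_def step_def by auto
  ultimately obtain s where s: "{a, b} = {hdir s, vdir s}"
    by (rule perpendicular_shape)
  have "bend_shape {w m, w (Suc m)} {w (Suc m), w (Suc (Suc m))} = bend_shape {B + a, B} {B, B + b}"
    unfolding B_def a_def b_def step_def by simp
  also have "\<dots> = s"
    using s by (rule bend_shape_corner)
  finally have "bend_shape {w m, w (Suc m)} {w (Suc m), w (Suc (Suc m))} = s" .
  moreover have "walk_edges w 0 N = ray B a (Suc m) \<union> ray B b (N - Suc m)"
    using walk_edges_split[of 0 "Suc m" N w] m(1) first second by simp
  moreover obtain c where "ray B a (Suc m) \<union> ray B b (N - Suc m) = cross_edges c" "cross_in {s} c"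
    using corner_rays_cross[OF s] .
  ultimately show ?thesis
    using that by simp
qed

end

lemma walk_path_edges:
  assumes "\<And>i. i < length es \<Longrightarrow> es ! i = {w i, w (Suc i)}"
    and "\<And>i. i < length es \<Longrightarrow> adjacent (w i) (w (Suc i))"
  shows "set es = walk_edges w 0 (length es)" "bend_positions es = turns w (length es)"
proof -
  show "set es = walk_edges w 0 (length es)"
    unfolding walk_edges_def set_conv_nth using assms(1) by force
  show "bend_positions es = turns w (length es)"
    unfolding bend_positions_def turns_def using assms by (auto simp: horizontal_adjacent)
qed

lemma other_end_in_doubleton:
  assumes "e = {p, q}" "p \<noteq> q" "x \<in> e"
  shows "e = {x, other_end e x}" "other_end e x \<noteq> x"
  using assms other_end_doubleton[of p q] other_end_doubleton[of q p] by (auto simp: insert_commute)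

lemma grid_path_nth_edge:
  assumes "grid_path es" "i < length es"
  obtains p q where "es ! i = {p, q}" "p \<noteq> q" "adjacent p q"
proof -
  have "grid_edge (es ! i)"
    using assms nth_mem unfolding grid_path_def by blast
  then show ?thesis
    using that adjacent_neq unfolding grid_edge_def adjacent_iff_dist[symmetric] by blast
qed

lemma grid_path_start:
  assumes "grid_path es"
  obtains v where "v \<in> es ! 0" "1 < length es \<longrightarrow> v \<notin> es ! 1"
proof -
  have "0 < length es"
    using assms unfolding grid_path_def by simp
  with assms obtain p q where pq: "es ! 0 = {p, q}" "p \<noteq> q"
    by (rule grid_path_nth_edge)
  have "\<not> es ! 0 \<subseteq> es ! 1" if "1 < length es"
  proof
    assume "es ! 0 \<subseteq> es ! 1"
    then have "card (es ! 0 \<inter> es ! 1) = 2"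
      using pq by (simp add: Int_absorb2)
    moreover have "card (es ! 0 \<inter> es ! 1) = 1"
      using assms that unfolding grid_path_def by simp
    ultimately show False by simp
  qed
  then show ?thesis
    using that pq by blast
qed

lemma grid_path_walk:
  assumes "grid_path es"
  obtains w where "grid_walk w (length es)" "\<And>i. i < length es \<Longrightarrow> es ! i = {w i, w (Suc i)}"
proof -
  let ?N = "length es"
  obtain v0 where v0: "v0 \<in> es ! 0" "1 < ?N \<longrightarrow> v0 \<notin> es ! 1"
    using assms by (rule grid_path_start)
  define w where "w = rec_nat v0 (\<lambda>i p. other_end (es ! i) p)"
  have w_Suc: "w (Suc i) = other_end (es ! i) (w i)" for i
    unfolding w_def by simp
  have w_in: "w i \<in> es ! i \<and> (Suc i < ?N \<longrightarrow> w i \<notin> es ! Suc i)" if "i < ?N" for i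
    using that
  proof (induction i)
    case 0
    then show ?case using v0 unfolding w_def by simp
  next
    case (Suc i)
    then have IH: "w i \<in> es ! i" "w i \<notin> es ! Suc i" by auto
    obtain p q where "es ! i = {p, q}" "p \<noteq> q"
      using assms Suc_lessD[OF Suc.prems] by (rule grid_path_nth_edge)
    then have ei: "es ! i = {w i, w (Suc i)}" "w (Suc i) \<noteq> w i"
      using other_end_in_doubleton IH(1) by (simp_all add: w_Suc)
    obtain c where c: "es ! i \<inter> es ! Suc i = {c}"
      using assms Suc.prems unfolding grid_path_def by (auto simp: card_1_singleton_iff)
    then have "c = w (Suc i)" using ei IH(2) by auto
    moreover have "Suc (Suc i) < ?N \<Longrightarrow> es ! i \<inter> es ! Suc (Suc i) = {}"
      using assms unfolding grid_path_def by blast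
    ultimately show ?case using c ei by auto
  qed
  have es_w: "es ! i = {w i, w (Suc i)}" and "adjacent (w i) (w (Suc i))" if i: "i < ?N" for i
  proof -
    obtain p q where pq: "es ! i = {p, q}" "p \<noteq> q" "adjacent p q"
      using assms i by (rule grid_path_nth_edge)
    then show "es ! i = {w i, w (Suc i)}"
      using other_end_in_doubleton(1) w_in i w_Suc by metis
    then show "adjacent (w i) (w (Suc i))"
      using pq by (metis adjacent_sym doubleton_eq_iff)
  qed
  have "w (Suc (Suc i)) \<noteq> w i" if "Suc i < ?N" for i
  proof -
    have "w (Suc (Suc i)) \<in> es ! Suc i" "w i \<notin> es ! Suc i"
      using es_w[of "Suc i"] w_in[of i] that by simp_all
    then show ?thesis by force
  qed
  then have "grid_walk w ?N"
    using \<open>\<And>i. i < ?N \<Longrightarrow> adjacent (w i) (w (Suc i))\<close> by unfold_locales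
  then show ?thesis
    using that es_w by blast
qed

lemma grid_path_cross:
  assumes "grid_path es" "shape_in S es"
  obtains c where "set es = cross_edges c" "cross_in S c"
proof -
  obtain w where walk: "grid_walk w (length es)" and es: "\<And>i. i < length es \<Longrightarrow> es ! i = {w i, w (Suc i)}"
    using grid_path_walk[OF assms(1)] by metis
  interpret grid_walk w "length es" by (rule walk)
  have edges: "set es = walk_edges w 0 (length es)" and turns: "bend_positions es = turns w (length es)"
    using walk_path_edges es adjacent_steps by blast+
  have "finite (turns w (length es))"
    unfolding turns_def by (rule finite_subset[of _ "{..<length es}"]) auto
  moreover have "card (turns w (length es)) \<le> 1"
    using assms(2) turns unfolding shape_in_def bends_def by simp
  ultimately consider "turns w (length es) = {}" | m where "turns w (length es) = {m}"
    by (metis card_1_singleton_iff card_0_eq le_Suc_eq le_zero_eq One_nat_def)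
  then show ?thesis
  proof cases
    case 1
    then have "LL \<in> S"
      using assms(2) turns unfolding shape_in_def bends_def by simp
    moreover have "0 < length es"
      using assms(1) unfolding grid_path_def by simp
    ultimately show ?thesis
      using straight_walk_cross[OF _ 1] that edges cross_in_mono by (metis empty_subsetI insert_subset)
  next
    case (2 m)
    then have "Suc m < length es"
      unfolding turns_def by auto
    then have "bend_shape {w m, w (Suc m)} {w (Suc m), w (Suc (Suc m))} \<in> S"
      using assms(2) turns 2 es unfolding shape_in_def by auto
    then show ?thesis
      using turning_walk_cross[OF 2] that edges cross_in_mono by (metis empty_subsetI insert_subset)
  qed
qed

lemma injective_walk_grid_path:
  assumes "0 < N" and inj: "inj_on w {..N}" and adj: "\<And>i. i < N \<Longrightarrow> adjacent (w i) (w (Suc i))"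
  shows "grid_path (map (\<lambda>i. {w i, w (Suc i)}) [0..<N])"
proof -
  let ?es = "map (\<lambda>i. {w i, w (Suc i)}) [0..<N]"
  have neq: "w i \<noteq> w j" if "i \<le> N" "j \<le> N" "i \<noteq> j" for i j
    using inj that unfolding inj_on_def by auto
  have "grid_edge {w i, w (Suc i)}" if "i < N" for i
    using adj[OF that] unfolding grid_edge_def adjacent_iff_dist by blast
  then have "grid_edge e" if "e \<in> set ?es" for e
    using that by auto
  moreover have "inj_on (\<lambda>i. {w i, w (Suc i)}) {0..<N}"
  proof (rule inj_onI)
    fix i j assume ij: "i \<in> {0..<N}" "j \<in> {0..<N}" and eq: "{w i, w (Suc i)} = {w j, w (Suc j)}"
    show "i = j"
    proof (rule ccontr)
      assume "i \<noteq> j"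
      then have "w i = w (Suc j)" "w (Suc i) = w j"
        using eq neq ij by (auto simp: doubleton_eq_iff)
      then have "i = Suc j" "Suc i = j"
        using neq[of i "Suc j"] neq[of "Suc i" j] ij by fastforce+
      then show False
        by simp
    qed
  qed
  moreover have "card (?es ! i \<inter> ?es ! Suc i) = 1" if "Suc i < length ?es" for i
  proof -
    have "?es ! i \<inter> ?es ! Suc i = {w (Suc i)}"
      using that neq by auto
    then show ?thesis by simp
  qed
  moreover have "?es ! i \<inter> ?es ! j = {}" if "Suc i < j" "j < length ?es" for i j
    using that neq by auto
  ultimately show ?thesis
    unfolding grid_path_def distinct_map using \<open>0 < N\<close> by auto
qed

definition corner_walk :: "shape \<Rightarrow> point \<Rightarrow> nat \<Rightarrow> nat \<Rightarrow> point" where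
  "corner_walk s p n i =
     (if i \<le> n then move p (vdir s) (int n - int i) else move p (hdir s) (int i - int n))"

definition corner_path :: "shape \<Rightarrow> point \<Rightarrow> nat \<Rightarrow> nat \<Rightarrow> point set list" where
  "corner_path s p m n = map (\<lambda>i. {corner_walk s p n i, corner_walk s p n (Suc i)}) [0..<n + m]"

lemma corner_walk_adjacent: "adjacent (corner_walk s p n i) (corner_walk s p n (Suc i))"
  unfolding corner_walk_def adjacent_def unit_dir_def by (cases p; cases s) auto

lemma corner_walk_horizontal:
  "snd (corner_walk s p n (Suc i)) = snd (corner_walk s p n i) \<longleftrightarrow> n \<le> i"
  unfolding corner_walk_def by (cases p; cases s) auto

lemma nth_corner_path:
  "i < length (corner_path s p m n) \<Longrightarrow>
     corner_path s p m n ! i = {corner_walk s p n i, corner_walk s p n (Suc i)}"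
  unfolding corner_path_def by simp

lemma corner_path_grid_path: "0 < n + m \<Longrightarrow> grid_path (corner_path s p m n)"
  unfolding corner_path_def
proof (rule injective_walk_grid_path)
  show "inj_on (corner_walk s p n) {..n + m}"
    unfolding inj_on_def corner_walk_def by (cases p; cases s) auto
qed (auto simp: corner_walk_adjacent)

lemma corner_path_edges: "set (corner_path s p m n) = cross_edges (shape_cross s p m n)"
proof -
  let ?w = "corner_walk s p n"
  have "walk_edges ?w 0 n = ray p (vdir s) n"
    using walk_edges_backward[of 0 n ?w p "vdir s"] by (simp add: corner_walk_def)
  moreover have "walk_edges ?w n (n + m) = ray p (hdir s) m"
    using walk_edges_forward[of n "n + m" ?w p "hdir s"] by (simp add: corner_walk_def)
  moreover have "set (corner_path s p m n) = walk_edges ?w 0 (n + m)"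
    using walk_path_edges(1)[of "corner_path s p m n" ?w] nth_corner_path corner_walk_adjacent
    by (simp add: corner_path_def)
  ultimately show ?thesis
    using walk_edges_split[of 0 n "n + m" ?w] by (simp add: cross_edges_shape_cross Un_commute)
qed

lemma corner_path_bend_positions:
  "bend_positions (corner_path s p m n) = (if 0 < n \<and> 0 < m then {n - 1} else {})"
proof -
  let ?w = "corner_walk s p n"
  have "(snd (?w (Suc i)) = snd (?w i)) \<noteq> (snd (?w (Suc (Suc i))) = snd (?w (Suc i))) \<longleftrightarrow> Suc i = n"
    for i
    unfolding corner_walk_horizontal by auto
  then have "turns ?w (n + m) = {i. Suc i < n + m \<and> Suc i = n}"
    unfolding turns_def by simp
  also have "\<dots> = (if 0 < n \<and> 0 < m then {n - 1} else {})"
    by (cases n) auto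
  finally show ?thesis
    using walk_path_edges(2)[of "corner_path s p m n" ?w] nth_corner_path corner_walk_adjacent
    by (simp add: corner_path_def)
qed

lemma corner_path_shape_in:
  assumes "s \<in> S" "LL \<in> S"
  shows "shape_in S (corner_path s p m n)"
proof -
  have "bend_shape (corner_path s p m n ! (n - 1)) (corner_path s p m n ! n) = s"
    if "0 < n" "0 < m"
  proof -
    have "corner_path s p m n ! (n - 1) = {p + vdir s, p}"
      "corner_path s p m n ! n = {p, p + hdir s}"
      using that unfolding corner_path_def corner_walk_def by simp_all
    then show ?thesis
      using bend_shape_corner[of "vdir s" "hdir s" s p] by (simp add: insert_commute)
  qed
  then show ?thesis
    using corner_path_bend_positions assms unfolding shape_in_def bends_def by auto
qed

lemma cross_grid_path:
  assumes "cross_in S c" "LL \<in> S" "cross_edges c \<noteq> {}"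
  obtains es where "grid_path es" "shape_in S es" "set es = cross_edges c"
proof -
  obtain s where "s \<in> S" and c: "c = shape_cross s (cx c, cy c) (nat (xhi c - xlo c)) (nat (yhi c - ylo c))"
    using assms(1) by (rule cross_in_shape_crossE)
  let ?es = "corner_path s (cx c, cy c) (nat (xhi c - xlo c)) (nat (yhi c - ylo c))"
  have "set ?es = cross_edges c"
    using c corner_path_edges by metis
  moreover have "?es \<noteq> []"
    using assms(3) calculation by auto
  then have "grid_path ?es"
    by (intro corner_path_grid_path) (simp add: corner_path_def, linarith)
  moreover have "shape_in S ?es"
    using \<open>s \<in> S\<close> assms(2) by (rule corner_path_shape_in)
  ultimately show ?thesis
    using that by blast
qed

definition cross_rep :: "shape set \<Rightarrow> 'a set \<Rightarrow> ('a \<Rightarrow> 'a \<Rightarrow> bool) \<Rightarrow> ('a \<Rightarrow> cross) \<Rightarrow> bool" where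
  "cross_rep S V E c \<longleftrightarrow> (\<forall>v\<in>V. cross_in S (c v))
     \<and> (\<forall>u\<in>V. \<forall>v\<in>V. u \<noteq> v \<longrightarrow> (E u v \<longleftrightarrow> crosses_meet (c u) (c v)))"

lemma B1_EPG_rep_crosses:
  assumes rep: "B1_EPG_rep V E P" and shapes: "\<forall>v\<in>V. shape_in S (P v)"
  obtains c where "cross_rep S V E c" "\<forall>v\<in>V. set (P v) = cross_edges (c v)"
proof -
  have "\<exists>c. set (P v) = cross_edges c \<and> cross_in S c" if "v \<in> V" for v
  proof -
    have "grid_path (P v)" "shape_in S (P v)"
      using rep shapes that unfolding B1_EPG_rep_def EPG_rep_def by auto
    then obtain c where "set (P v) = cross_edges c" "cross_in S c"
      by (rule grid_path_cross)
    then show ?thesis by blast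
  qed
  then have choice: "\<forall>v\<in>V. \<exists>c. set (P v) = cross_edges c \<and> cross_in S c"
    by blast
  obtain c where c: "\<forall>v\<in>V. set (P v) = cross_edges (c v) \<and> cross_in S (c v)"
    using bchoice[OF choice] by blast
  then have "cross_rep S V E c"
    using rep unfolding cross_rep_def B1_EPG_rep_def EPG_rep_def by (simp add: cross_edges_Int_iff)
  then show ?thesis
    using that c by blast
qed

lemma shape_class_cross_rep:
  assumes "shape_class S V E"
  obtains c where "cross_rep S V E c"
proof -
  obtain P where "B1_EPG_rep V E P" "\<forall>v\<in>V. shape_in S (P v)"
    using assms unfolding shape_class_def by blast
  then show ?thesis
    using that by (rule B1_EPG_rep_crosses)
qed

lemma B1_shape_in_UNIV: "bends es \<le> 1 \<Longrightarrow> shape_in UNIV es"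
  unfolding shape_in_def by simp

definition triangles_meet :: "'a set \<Rightarrow> ('a \<Rightarrow> 'a \<Rightarrow> bool) \<Rightarrow> ('a \<Rightarrow> cross) \<Rightarrow> bool" where
  "triangles_meet V E c \<longleftrightarrow> (\<forall>a\<in>V. \<forall>b\<in>V. \<forall>d\<in>V. a \<noteq> b \<and> a \<noteq> d \<and> b \<noteq> d
     \<and> E a b \<and> E a d \<and> E b d \<longrightarrow> crosses_meet3 (c a) (c b) (c d))"

lemma helly_B1_EPG_cross_rep:
  assumes "helly_B1_EPG V E"
  obtains c where "cross_rep UNIV V E c" "triangles_meet V E c"
proof -
  obtain P where rep: "B1_EPG_rep V E P" and helly: "helly_rep V P"
    using assms unfolding helly_B1_EPG_def by blast
  have "\<forall>v\<in>V. shape_in UNIV (P v)"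
    using rep B1_shape_in_UNIV unfolding B1_EPG_rep_def by blast
  with rep obtain c where c: "cross_rep UNIV V E c" and edges: "\<forall>v\<in>V. set (P v) = cross_edges (c v)"
    by (rule B1_EPG_rep_crosses)
  have "crosses_meet3 (c a) (c b) (c d)"
    if "a \<in> V" "b \<in> V" "d \<in> V" "a \<noteq> b" "a \<noteq> d" "b \<noteq> d" "E a b" "E a d" "E b d" for a b d
  proof -
    have "set (P v) \<noteq> {}" if "v \<in> V" for v
      using rep that unfolding B1_EPG_rep_def EPG_rep_def grid_path_def by auto
    then have "{a, b, d} \<noteq> {} \<and> (\<forall>u\<in>{a, b, d}. \<forall>v\<in>{a, b, d}. set (P u) \<inter> set (P v) \<noteq> {})"
      using rep that unfolding B1_EPG_rep_def EPG_rep_def by (auto simp: Int_commute)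
    moreover have "{a, b, d} \<subseteq> V"
      using that by simp
    ultimately obtain e where "\<forall>v\<in>{a, b, d}. e \<in> set (P v)"
      using helly[unfolded helly_rep_def, THEN spec[of _ "{a, b, d}"]] by blast
    then have "e \<in> cross_edges (c a)" "e \<in> cross_edges (c b)" "e \<in> cross_edges (c d)"
      using edges that by auto
    then show ?thesis
      by (rule cross_edges_Int3)
  qed
  then have "triangles_meet V E c"
    unfolding triangles_meet_def by blast
  then show ?thesis
    using that c by blast
qed

lemma cross_rep_shape_class:
  assumes "LL \<in> S" and rep: "cross_rep S V E c" and nonempty: "\<forall>v\<in>V. cross_edges (c v) \<noteq> {}"
  shows "shape_class S V E"
proof -
  have "\<exists>es. grid_path es \<and> shape_in S es \<and> set es = cross_edges (c v)" if "v \<in> V" for v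
  proof -
    have "cross_in S (c v)" "cross_edges (c v) \<noteq> {}"
      using rep nonempty that unfolding cross_rep_def by blast+
    then obtain es where "grid_path es" "shape_in S es" "set es = cross_edges (c v)"
      using assms(1) cross_grid_path by metis
    then show ?thesis by blast
  qed
  then have choice: "\<forall>v\<in>V. \<exists>es. grid_path es \<and> shape_in S es \<and> set es = cross_edges (c v)"
    by blast
  obtain P where P: "\<forall>v\<in>V. grid_path (P v) \<and> shape_in S (P v) \<and> set (P v) = cross_edges (c v)"
    using bchoice[OF choice] by blast
  then have "B1_EPG_rep V E P"
    using rep unfolding B1_EPG_rep_def EPG_rep_def cross_rep_def shape_in_def
    by (simp add: cross_edges_Int_iff)
  then show ?thesis
    using P unfolding shape_class_def by blast
qed

lemma shape_class_mono: "shape_class S V E \<Longrightarrow> S \<subseteq> T \<Longrightarrow> shape_class T V E"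
  unfolding shape_class_def shape_in_def by blast

lemma triangle_free_helly:
  assumes "shape_class S V E"
    and triangle_free: "\<forall>a\<in>V. \<forall>b\<in>V. \<forall>d\<in>V. \<not> (E a b \<and> E b d \<and> E a d)"
  shows "helly_B1_EPG V E"
proof -
  obtain P where P: "B1_EPG_rep V E P"
    using assms(1) unfolding shape_class_def by blast
  have "\<exists>e. \<forall>v\<in>W. e \<in> set (P v)"
    if W: "W \<subseteq> V" "W \<noteq> {}" and meet: "\<forall>u\<in>W. \<forall>v\<in>W. set (P u) \<inter> set (P v) \<noteq> {}" for W
  proof -
    have adj: "E u v" if "u \<in> W" "v \<in> W" "u \<noteq> v" for u v
      using P meet W that unfolding B1_EPG_rep_def EPG_rep_def by blast
    obtain a where a: "a \<in> W" using W by blast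
    have "\<exists>b\<in>W. W \<subseteq> {a, b}"
    proof (cases "W = {a}")
      case False
      then obtain b where b: "b \<in> W" "b \<noteq> a" using a by blast
      have "d \<in> {a, b}" if "d \<in> W" for d
        using triangle_free adj[OF a b(1)] adj[OF b(1) that] adj[OF a that] a b that W(1) by blast
      then show ?thesis using b by blast
    qed (use a in blast)
    then obtain b where "b \<in> W" "W \<subseteq> {a, b}" by blast
    moreover obtain e where "e \<in> set (P a)" "e \<in> set (P b)"
      using meet a \<open>b \<in> W\<close> by blast
    ultimately show ?thesis by blast
  qed
  then show ?thesis
    using P unfolding helly_B1_EPG_def helly_rep_def by blast
qed

section \<open>The Helly property of \<llcorner> and \<urcorner>\<close>

lemma pairwise_meeting_aligned:
  assumes meet: "\<forall>c\<in>C. \<forall>d\<in>C. crosses_meet c d"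
  shows "(\<forall>c\<in>C. \<forall>d\<in>C. cy c = cy d) \<or> (\<forall>c\<in>C. \<forall>d\<in>C. cx c = cx d)"
proof (rule ccontr)
  assume "\<not> ?thesis"
  then obtain a b c d where abcd: "a \<in> C" "b \<in> C" "cy a \<noteq> cy b" "c \<in> C" "d \<in> C" "cx c \<noteq> cx d"
    by blast
  have line: "cy u = cy v \<or> cx u = cx v" if "u \<in> C" "v \<in> C" for u v
    using meet that unfolding crosses_meet_def by blast
  have "cx e = cx a" if "e \<in> C" for e
    using line[OF that abcd(1)] line[OF that abcd(2)] line[OF abcd(1,2)] abcd(3) by auto
  then show False
    using abcd(4-6) by metis
qed

lemma LL_UR_same_bend:
  assumes "cross_in {LL, UR} c" "cross_in {LL, UR} d" "cx c = cx d" "cy c = cy d" "crosses_meet c d"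
  shows "has_shape LL c \<longleftrightarrow> has_shape LL d"
  using assms unfolding cross_in_def crosses_meet_def by auto

lemma common_bend_helly:
  assumes "s \<in> {LL, UR}" and C: "\<forall>c\<in>C. cross_in {s} c \<and> cx c = x \<and> cy c = y"
    and meet: "\<forall>c\<in>C. \<forall>d\<in>C. crosses_meet c d"
  shows "\<exists>e. \<forall>c\<in>C. e \<in> cross_edges c"
proof (cases "s = LL")
  case True
  show ?thesis
  proof (cases "\<forall>c\<in>C. x < xhi c")
    case True
    then have "\<forall>c\<in>C. hedge x y \<in> cross_edges c"
      using C \<open>s = LL\<close> unfolding cross_in_def by auto
    then show ?thesis by blast
  next
    case False
    \<comment> \<open>a cross with empty horizontal arm meets every other cross vertically\<close>
    then obtain u where u: "u \<in> C" "xhi u \<le> x" by auto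
    have "vedge x y \<in> cross_edges c" if "c \<in> C" for c
      using C[rule_format, OF that] C[rule_format, OF u(1)] meet[rule_format, OF u(1) that] u(2) \<open>s = LL\<close>
      unfolding cross_in_def crosses_meet_def by auto
    then show ?thesis by blast
  qed
next
  case False
  then have "s = UR" using assms(1) by blast
  show ?thesis
  proof (cases "\<forall>c\<in>C. xlo c < x")
    case True
    then have "\<forall>c\<in>C. hedge (x - 1) y \<in> cross_edges c"
      using C \<open>s = UR\<close> unfolding cross_in_def by auto
    then show ?thesis by blast
  next
    case False
    then obtain u where u: "u \<in> C" "x \<le> xlo u" by auto
    have "vedge x (y - 1) \<in> cross_edges c" if "c \<in> C" for c
      using C[rule_format, OF that] C[rule_format, OF u(1)] meet[rule_format, OF u(1) that] u(2) \<open>s = UR\<close>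
      unfolding cross_in_def crosses_meet_def by auto
    then show ?thesis by blast
  qed
qed

(* If two bend points differ, each cross meets one with a different bend point in its row, so the
   horizontal arms overlap pairwise; otherwise all crosses have the same bend point and shape. *)
lemma row_LL_UR_helly:
  assumes "finite C" "C \<noteq> {}" and shapes: "\<forall>c\<in>C. cross_in {LL, UR} c"
    and meet: "\<forall>c\<in>C. \<forall>d\<in>C. crosses_meet c d" and row: "\<forall>c\<in>C. cy c = y"
  shows "\<exists>e. \<forall>c\<in>C. e \<in> cross_edges c"
proof (cases "\<exists>c\<in>C. \<exists>d\<in>C. cx c \<noteq> cx d")
  case True
  have overlap: "xlo c < xhi d" if "c \<in> C" "d \<in> C" for c d
  proof (cases "cx c = cx d")
    case False
    then show ?thesis
      using meet[rule_format, OF that] unfolding crosses_meet_def by auto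
  next
    case True
    obtain e where e: "e \<in> C" "cx e \<noteq> cx c"
      using \<open>\<exists>c\<in>C. \<exists>d\<in>C. cx c \<noteq> cx d\<close> by metis
    then have "xlo c < xhi c" "xlo d < xhi d"
      using meet[rule_format, OF that(1) e(1)] meet[rule_format, OF that(2) e(1)] True
      unfolding crosses_meet_def by auto
    moreover have "has_shape LL c \<longleftrightarrow> has_shape LL d"
      using LL_UR_same_bend[of c d] shapes meet row that True by simp
    ultimately show ?thesis
      using shapes[rule_format, OF that(1)] shapes[rule_format, OF that(2)] True
      unfolding cross_in_def by auto
  qed
  define k where "k = Max (xlo ` C)"
  have "k \<in> xlo ` C" "\<forall>c\<in>C. xlo c \<le> k"
    unfolding k_def using assms(1,2) by simp_all
  then have "\<forall>c\<in>C. hedge k y \<in> cross_edges c"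
    using overlap row by auto
  then show ?thesis by blast
next
  case False
  then obtain c0 where c0: "c0 \<in> C" "\<forall>c\<in>C. cx c = cx c0"
    using assms(2) by blast
  define s where "s = (if has_shape LL c0 then LL else UR)"
  have "cross_in {s} c \<and> cx c = cx c0 \<and> cy c = y" if "c \<in> C" for c
  proof -
    have "cx c0 = cx c" "cy c0 = cy c"
      using c0(2)[rule_format, OF that] row c0(1) that by simp_all
    then have "has_shape LL c0 \<longleftrightarrow> has_shape LL c"
      using LL_UR_same_bend[OF shapes[rule_format, OF c0(1)] shapes[rule_format, OF that]]
        meet[rule_format, OF c0(1) that] by blast
    then show ?thesis
      using shapes[rule_format, OF that] c0(2)[rule_format, OF that] row that
      unfolding s_def cross_in_def by auto
  qed
  moreover have "s \<in> {LL, UR}"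
    unfolding s_def by simp
  ultimately show ?thesis
    using common_bend_helly[of s C "cx c0" y] meet by blast
qed

definition transpose_cross :: "cross \<Rightarrow> cross" where
  "transpose_cross c = Cross (cy c) (cx c) (ylo c) (yhi c) (xlo c) (xhi c)"

lemma crosses_meet_transpose [simp]:
  "crosses_meet (transpose_cross c) (transpose_cross d) \<longleftrightarrow> crosses_meet c d"
  unfolding crosses_meet_def transpose_cross_def by auto

lemma cross_in_LL_UR_transpose [simp]:
  "cross_in {LL, UR} (transpose_cross c) \<longleftrightarrow> cross_in {LL, UR} c"
  unfolding cross_in_def transpose_cross_def by auto

lemma transpose_cross_edges:
  assumes "e \<in> cross_edges (transpose_cross c)"
  shows "prod.swap ` e \<in> cross_edges c"
  using assms
proof (cases rule: cross_edgesE)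
  case (1 x)
  then have "prod.swap ` e = vedge (cx c) x"
    by (simp add: transpose_cross_def hedge_def vedge_def)
  then show ?thesis
    using assms 1 by (simp add: transpose_cross_def)
next
  case (2 y)
  then have "prod.swap ` e = hedge y (cy c)"
    by (simp add: transpose_cross_def hedge_def vedge_def)
  then show ?thesis
    using assms 2 by (simp add: transpose_cross_def)
qed

(* Reflection in the diagonal fixes \<llcorner> and \<urcorner>, so the column case reduces to the row case. *)
theorem LL_UR_helly:
  assumes "finite C" "C \<noteq> {}" "\<forall>c\<in>C. cross_in {LL, UR} c" "\<forall>c\<in>C. \<forall>d\<in>C. crosses_meet c d"
  shows "\<exists>e. \<forall>c\<in>C. e \<in> cross_edges c"
proof -
  obtain c0 where "c0 \<in> C" using assms(2) by blast
  from pairwise_meeting_aligned[OF assms(4)] show ?thesis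
  proof
    assume rows: "\<forall>c\<in>C. \<forall>d\<in>C. cy c = cy d"
    have "\<forall>c\<in>C. cy c = cy c0"
      using rows \<open>c0 \<in> C\<close> by blast
    then show ?thesis
      using row_LL_UR_helly[OF assms] by blast
  next
    assume columns: "\<forall>c\<in>C. \<forall>d\<in>C. cx c = cx d"
    let ?T = "transpose_cross ` C"
    have "finite ?T" "?T \<noteq> {}" "\<forall>c\<in>?T. cross_in {LL, UR} c"
      using assms(1-3) by auto
    moreover have "\<forall>c\<in>?T. \<forall>d\<in>?T. crosses_meet c d"
      using assms(4) by auto
    moreover have "\<forall>c\<in>?T. cy c = cx c0"
    proof
      fix c assume "c \<in> ?T"
      then obtain c' where "c' \<in> C" "c = transpose_cross c'" by blast
      then show "cy c = cx c0"
        using columns[rule_format, OF \<open>c' \<in> C\<close> \<open>c0 \<in> C\<close>] by (simp add: transpose_cross_def)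
    qed
    ultimately obtain e where "\<forall>c\<in>?T. e \<in> cross_edges c"
      using row_LL_UR_helly[of ?T "cx c0"] by blast
    then have "\<forall>c\<in>C. prod.swap ` e \<in> cross_edges c"
      using transpose_cross_edges by blast
    then show ?thesis by blast
  qed
qed

lemma cross_edges_nonempty:
  assumes "xlo c < xhi c \<or> ylo c < yhi c"
  shows "cross_edges c \<noteq> {}"
proof -
  have "hedge (xlo c) (cy c) \<in> cross_edges c \<or> vedge (cx c) (ylo c) \<in> cross_edges c"
    using assms by simp
  then show ?thesis by blast
qed

theorem shape_class_LL_UR_helly:
  assumes "graph V E" "shape_class {LL, UR} V E"
  shows "helly_B1_EPG V E"
proof -
  obtain P where rep: "B1_EPG_rep V E P" and shapes: "\<forall>v\<in>V. shape_in {LL, UR} (P v)"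
    using assms(2) unfolding shape_class_def by blast
  obtain c where c: "cross_rep {LL, UR} V E c" and edges: "\<forall>v\<in>V. set (P v) = cross_edges (c v)"
    using rep shapes by (rule B1_EPG_rep_crosses)
  have "\<exists>e. \<forall>v\<in>W. e \<in> set (P v)"
    if W: "W \<subseteq> V" "W \<noteq> {}" and meet: "\<forall>u\<in>W. \<forall>v\<in>W. set (P u) \<inter> set (P v) \<noteq> {}" for W
  proof -
    have "finite (c ` W)"
      using assms(1) W(1) finite_subset unfolding graph_def by blast
    moreover have "c ` W \<noteq> {}" "\<forall>d\<in>c ` W. cross_in {LL, UR} d"
      using W c unfolding cross_rep_def by auto
    moreover have "\<forall>d\<in>c ` W. \<forall>d'\<in>c ` W. crosses_meet d d'"
    proof (intro ballI)
      fix d d' assume "d \<in> c ` W" "d' \<in> c ` W"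
      then obtain u v where uv: "u \<in> W" "v \<in> W" "d = c u" "d' = c v" by blast
      have "set (P u) \<inter> set (P v) \<noteq> {}"
        using meet uv(1,2) by blast
      moreover have "set (P u) = cross_edges d" "set (P v) = cross_edges d'"
        using edges W(1) uv by auto
      ultimately have "cross_edges d \<inter> cross_edges d' \<noteq> {}"
        by simp
      then show "crosses_meet d d'"
        by (simp add: cross_edges_Int_iff)
    qed
    ultimately obtain e where "\<forall>d\<in>c ` W. e \<in> cross_edges d"
      using LL_UR_helly by blast
    then show ?thesis
      using edges W(1) by auto
  qed
  then show ?thesis
    using rep unfolding helly_B1_EPG_def helly_rep_def by blast
qed

section \<open>Three small graphs\<close>

lemma UNIV_shape: "(UNIV :: shape set) = {LL, LR, UL, UR}"
  using shape.exhaust by auto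

definition edge_rel :: "(nat \<times> nat) list \<Rightarrow> nat \<Rightarrow> nat \<Rightarrow> bool" where
  "edge_rel L u v \<longleftrightarrow> (u, v) \<in> set L \<or> (v, u) \<in> set L"

(* K_{2,3} with parts {0, 1} and {2, 3, 4}; the 3-sun, i.e. the triangle 0 1 2 with an ear on each
   side; the 3-cube, whose vertices are the 3-bit numbers 0..7. *)
definition K23 :: "nat \<Rightarrow> nat \<Rightarrow> bool" where
  "K23 = edge_rel [(0, 2), (0, 3), (0, 4), (1, 2), (1, 3), (1, 4)]"

definition sun3 :: "nat \<Rightarrow> nat \<Rightarrow> bool" where
  "sun3 = edge_rel [(0, 1), (0, 2), (1, 2), (0, 3), (1, 3), (0, 4), (2, 4), (1, 5), (2, 5)]"

definition cube :: "nat \<Rightarrow> nat \<Rightarrow> bool" where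
  "cube = edge_rel [(0, 1), (0, 2), (0, 4), (1, 3), (1, 5), (2, 3), (2, 6), (3, 7), (4, 5), (4, 6), (5, 7), (6, 7)]"

lemma graph_K23: "graph {0, 1, 2, 3, 4} K23"
  and graph_sun3: "graph {0, 1, 2, 3, 4, 5} sun3"
  and graph_cube: "graph {0, 1, 2, 3, 4, 5, 6, 7} cube"
  unfolding graph_def K23_def sun3_def cube_def edge_rel_def by auto

lemma K23_LL_UR: "shape_class {LL, UR} {0, 1, 2, 3, 4} K23"
proof (rule cross_rep_shape_class)
  let ?c = "(!) [Cross 3 3 3 5 3 6, Cross 4 5 2 4 4 5, Cross 4 3 4 6 3 5, Cross 3 5 3 4 5 6,
                 Cross 3 5 2 3 2 5]"
  show "cross_rep {LL, UR} {0, 1, 2, 3, 4} K23 ?c"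
    unfolding cross_rep_def cross_in_def crosses_meet_def K23_def edge_rel_def by simp
  show "\<forall>v\<in>{0, 1, 2, 3, 4}. cross_edges (?c v) \<noteq> {}"
    by (simp add: cross_edges_nonempty)
qed simp

lemma sun3_LL_UL: "shape_class {LL, UL} {0, 1, 2, 3, 4, 5} sun3"
proof (rule cross_rep_shape_class)
  let ?c = "(!) [Cross 1 5 1 2 2 5, Cross 1 4 1 5 3 4, Cross 1 4 1 4 4 6, Cross 1 4 1 1 2 4,
                 Cross 1 5 1 3 5 7, Cross 1 4 1 6 4 4]"
  show "cross_rep {LL, UL} {0, 1, 2, 3, 4, 5} sun3 ?c"
    unfolding cross_rep_def cross_in_def crosses_meet_def sun3_def edge_rel_def by simp
  show "\<forall>v\<in>{0, 1, 2, 3, 4, 5}. cross_edges (?c v) \<noteq> {}"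
    by (simp add: cross_edges_nonempty)
qed simp

lemma cube_all_shapes: "shape_class UNIV {0, 1, 2, 3, 4, 5, 6, 7} cube"
proof (rule cross_rep_shape_class)
  let ?c = "(!) [Cross 4 3 0 4 3 10, Cross 4 6 4 7 6 7, Cross 4 6 3 4 1 6, Cross 5 6 1 5 6 8,
                 Cross 5 3 2 5 2 3, Cross 5 6 5 8 0 6, Cross 4 3 4 9 0 3, Cross 5 3 5 6 3 9]"
  show "cross_rep UNIV {0, 1, 2, 3, 4, 5, 6, 7} cube ?c"
    unfolding cross_rep_def cross_in_def crosses_meet_def cube_def edge_rel_def UNIV_shape by simp
  show "\<forall>v\<in>{0, 1, 2, 3, 4, 5, 6, 7}. cross_edges (?c v) \<noteq> {}"
    by (simp add: cross_edges_nonempty)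
qed simp

lemma cube_helly: "helly_B1_EPG {0, 1, 2, 3, 4, 5, 6, 7} cube"
  using cube_all_shapes by (rule triangle_free_helly) (simp add: cube_def edge_rel_def)

lemma K23_not_LL_UL: "\<not> shape_class {LL, UL} {0, 1, 2, 3, 4} K23"
proof
  assume "shape_class {LL, UL} {0, 1, 2, 3, 4} K23"
  then obtain c where "cross_rep {LL, UL} {0, 1, 2, 3, 4} K23 c"
    by (rule shape_class_cross_rep)
  then show False
    unfolding cross_rep_def cross_in_def crosses_meet_def K23_def edge_rel_def
    by (simp; smt (z3))
qed

lemma cube_not_LL_UL_UR: "\<not> shape_class {LL, UL, UR} {0, 1, 2, 3, 4, 5, 6, 7} cube"
proof
  assume "shape_class {LL, UL, UR} {0, 1, 2, 3, 4, 5, 6, 7} cube"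
  then obtain c where "cross_rep {LL, UL, UR} {0, 1, 2, 3, 4, 5, 6, 7} cube c"
    by (rule shape_class_cross_rep)
  then show False
    unfolding cross_rep_def cross_in_def crosses_meet_def cube_def edge_rel_def
    by (simp; smt (z3))
qed

lemma sun3_not_helly: "\<not> helly_B1_EPG {0, 1, 2, 3, 4, 5} sun3"
proof
  assume "helly_B1_EPG {0, 1, 2, 3, 4, 5} sun3"
  then obtain c where rep: "cross_rep UNIV {0, 1, 2, 3, 4, 5} sun3 c"
    and triangles: "triangles_meet {0, 1, 2, 3, 4, 5} sun3 c"
    by (rule helly_B1_EPG_cross_rep)
  have "crosses_meet3 (c 0) (c 1) (c 2)" "crosses_meet3 (c 0) (c 1) (c 3)"
    "crosses_meet3 (c 0) (c 2) (c 4)" "crosses_meet3 (c 1) (c 2) (c 5)"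
    using triangles[unfolded triangles_meet_def, rule_format, of 0 1 2]
      triangles[unfolded triangles_meet_def, rule_format, of 0 1 3]
      triangles[unfolded triangles_meet_def, rule_format, of 0 2 4]
      triangles[unfolded triangles_meet_def, rule_format, of 1 2 5]
    by (simp_all add: sun3_def edge_rel_def)
  with rep show False
    unfolding cross_rep_def cross_in_def crosses_meet_def crosses_meet3_def sun3_def edge_rel_def UNIV_shape
    by (simp; smt (z3))
qed

lemma K23_not_LL: "\<not> shape_class {LL} {0, 1, 2, 3, 4} K23"
  using K23_not_LL_UL shape_class_mono[of "{LL}" _ _ "{LL, UL}"] by blast

lemma K23_helly: "helly_B1_EPG {0, 1, 2, 3, 4} K23"
  using graph_K23 K23_LL_UR by (rule shape_class_LL_UR_helly)

lemma sun3_LL_UL_UR: "shape_class {LL, UL, UR} {0, 1, 2, 3, 4, 5} sun3"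
  using sun3_LL_UL shape_class_mono by blast

lemma cube_not_LL_UR: "\<not> shape_class {LL, UR} {0, 1, 2, 3, 4, 5, 6, 7} cube"
  using cube_not_LL_UL_UR shape_class_mono[of "{LL, UR}" _ _ "{LL, UL, UR}"] by blast

theorem theorem2p1:
  shows "(\<forall>(V::'a set) E. graph V E \<and> shape_class {LL} V E \<longrightarrow> shape_class {LL, UR} V E)
   \<and> (\<exists>(V::nat set) E. graph V E \<and> shape_class {LL, UR} V E \<and> \<not> shape_class {LL} V E)
   \<and> (\<forall>(V::'a set) E. graph V E \<and> shape_class {LL, UR} V E \<longrightarrow> helly_B1_EPG V E)
   \<and> (\<exists>(V::nat set) E. graph V E \<and> helly_B1_EPG V E \<and> \<not> shape_class {LL, UR} V E)
   \<and> (\<exists>(V::nat set) E. graph V E \<and> helly_B1_EPG V E \<and> \<not> shape_class {LL, UL} V E)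
   \<and> (\<exists>(V::nat set) E. graph V E \<and> shape_class {LL, UL} V E \<and> \<not> helly_B1_EPG V E)
   \<and> (\<exists>(V::nat set) E. graph V E \<and> helly_B1_EPG V E \<and> \<not> shape_class {LL, UL, UR} V E)
   \<and> (\<exists>(V::nat set) E. graph V E \<and> shape_class {LL, UL, UR} V E \<and> \<not> helly_B1_EPG V E)"
proof (intro conjI)
  show "\<forall>(V::'a set) E. graph V E \<and> shape_class {LL} V E \<longrightarrow> shape_class {LL, UR} V E"
    using shape_class_mono by blast
  show "\<forall>(V::'a set) E. graph V E \<and> shape_class {LL, UR} V E \<longrightarrow> helly_B1_EPG V E"
    using shape_class_LL_UR_helly by blast
  show "\<exists>(V::nat set) E. graph V E \<and> shape_class {LL, UR} V E \<and> \<not> shape_class {LL} V E"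
    using graph_K23 K23_LL_UR K23_not_LL by blast
  show "\<exists>(V::nat set) E. graph V E \<and> helly_B1_EPG V E \<and> \<not> shape_class {LL, UL} V E"
    using graph_K23 K23_helly K23_not_LL_UL by blast
  show "\<exists>(V::nat set) E. graph V E \<and> helly_B1_EPG V E \<and> \<not> shape_class {LL, UR} V E"
    using graph_cube cube_helly cube_not_LL_UR by blast
  show "\<exists>(V::nat set) E. graph V E \<and> helly_B1_EPG V E \<and> \<not> shape_class {LL, UL, UR} V E"
    using graph_cube cube_helly cube_not_LL_UL_UR by blast
  show "\<exists>(V::nat set) E. graph V E \<and> shape_class {LL, UL} V E \<and> \<not> helly_B1_EPG V E"
    using graph_sun3 sun3_LL_UL sun3_not_helly by blast
  show "\<exists>(V::nat set) E. graph V E \<and> shape_class {LL, UL, UR} V E \<and> \<not> helly_B1_EPG V E"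
    using graph_sun3 sun3_LL_UL_UR sun3_not_helly by blast
qed

end
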